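(* Let $d\ge 1$, $n_1,n_2\in\mathbb{N}$, and for $i=1,\dots,n_1$ let $\alpha_i\in\mathbb{N}$ and $\kappa_i^2>0$; for $j=1,\dots,n_2$ let $b_j\in\mathbb{R}$ and $\mathbf{B}_j\in\mathbb{R}^d$. Let $X(\mathbf{s})$, $\mathbf{s}\in\mathbb{R}^d$, be the stationary Gaussian random field solving $$\Biggl(\prod_{i=1}^{n_1}(\kappa_i^2-\Delta)^{\alpha_i/2}\Biggr)X(\mathbf{s})=\Biggl(\prod_{j=1}^{n_2}(b_j+\mathbf{B}_j^{\top}\nabla)\Biggr)\mathcal{W}(\mathbf{s}),$$ where $\mathcal{W}$ is Gaussian white noise on $\mathbb{R}^d$. If $2\sum_{i=1}^{n_1}\alpha_i-2n_2>d$, then $X$ has almost surely continuous sample functions (i.e. admits a modification with almost surely continuous sample paths).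
   Context: $\Delta$ denotes the Laplacian and $\nabla$ the gradient on $\mathbb{R}^d$; the fractional operator $(\kappa^2-\Delta)^{\alpha/2}$ acts in the spectral domain as multiplication by $(\kappa^2+\|\mathbf{k}\|^2)^{\alpha/2}$, so that $X$ is the stationary Gaussian field with spectral density proportional to $\prod_{j=1}^{n_2}(b_j^2+\mathbf{k}^{\top}\mathbf{B}_j\mathbf{B}_j^{\top}\mathbf{k})\big/\prod_{j=1}^{n_1}(\kappa_j^2+\|\mathbf{k}\|^2)^{\alpha_j}$. *)

theory Defs
  imports "HOL-Probability.Probability"
begin

definition gaussian_rv :: "'a measure \<Rightarrow> ('a \<Rightarrow> real) \<Rightarrow> bool" where
  "gaussian_rv M Y \<longleftrightarrow> Y \<in> borel_measurable M \<and>
     (\<exists>mu sigma. (sigma > 0 \<and> distributed M lborel Y (\<lambda>x. ennreal (normal_density mu sigma x)))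
               \<or> distr M borel Y = return borel mu)"

definition gaussian_field :: "'a measure \<Rightarrow> ('i \<Rightarrow> 'a \<Rightarrow> real) \<Rightarrow> bool" where
  "gaussian_field M X \<longleftrightarrow>
     (\<forall>S c. finite S \<longrightarrow> gaussian_rv M (\<lambda>\<omega>. \<Sum>s\<in>S. c s * X s \<omega>))"

text \<open>The (unnormalised) spectral density of the field in the paper:
  prod_j (b_j^2 + k^T B_j B_j^T k) / prod_i (kappa_i^2 + |k|^2)^alpha_i.\<close>
definition spec_dens ::
  "nat \<Rightarrow> (nat \<Rightarrow> nat) \<Rightarrow> (nat \<Rightarrow> real) \<Rightarrow> nat \<Rightarrow> (nat \<Rightarrow> real) \<Rightarrow> (nat \<Rightarrow> real^'d)
    \<Rightarrow> real^'d \<Rightarrow> real" where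
  "spec_dens n1 \<alpha> \<kappa> n2 b B k =
     (\<Prod>j<n2. (b j)\<^sup>2 + (B j \<bullet> k)\<^sup>2) / (\<Prod>i<n1. ((\<kappa> i)\<^sup>2 + (norm k)\<^sup>2) ^ \<alpha> i)"

definition stationary_gaussian_with_spectral_density ::
  "'a measure \<Rightarrow> (real^'d \<Rightarrow> 'a \<Rightarrow> real) \<Rightarrow> (real^'d \<Rightarrow> real) \<Rightarrow> bool" where
  "stationary_gaussian_with_spectral_density M X f \<longleftrightarrow>
     gaussian_field M X \<and>
     (\<exists>c>0. \<forall>s t. integrable M (\<lambda>\<omega>. X s \<omega> * X t \<omega>) \<and>
        (\<integral>\<omega>. X s \<omega> \<partial>M) = 0 \<and>
        (\<integral>\<omega>. X s \<omega> * X t \<omega> \<partial>M) = c * (\<integral>k. cos (k \<bullet> (s - t)) * f k \<partial>lborel))"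

end

theory Submission
  imports Defs
begin

text \<open>The spectral density is O((1 + |k|^2)^(n2 - \<Sum>\<alpha>)), and the decay hypothesis makes it
  integrable even against |k|^(1/2). Since 1 - cos x \<le> 2|x|^(1/2), the spectral representation of the
  covariance gives E (X s - X t)^2 \<le> A |s - t|^(1/2), and as the increments are centred Gaussian,
  E (X s - X t)^(8m) \<le> C |s - t|^(2m) for every m. With m = d + 1 this is a Kolmogorov-Chentsov
  moment condition: summed over the O(4^(nd)) pairs of neighbouring points of the dyadic grid of mesh
  2^-n in a cube, the high moments have expectation O(4^-n), so almost surely the increments at level n
  decay geometrically. Limits along dyadic truncations then define a continuous modification.\<close>

section \<open>Decay of the spectral density\<close>

lemma nn_integral_one_plus_sq_powr_finite:
  fixes a :: real
  assumes a: "a > 1/2"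
  shows "(\<integral>\<^sup>+x. ennreal ((1 + x\<^sup>2) powr (-a)) \<partial>lborel) < \<infinity>"
proof -
  define e where "e = -2 * a"
  have e: "e < -1" using a by (simp add: e_def)
  have tail: "(\<integral>\<^sup>+x. ennreal (indicator {1..} x * x powr e) \<partial>lborel) < \<infinity>"
  proof -
    have eq: "(\<lambda>x. indicator {1..} x * x powr e) = (\<lambda>x. if x \<in> {1..} then x powr e else 0)"
      by (auto simp: indicator_def)
    have "((\<lambda>x. indicator {1..} x * x powr e) has_integral -(1 powr (e+1)) / (e+1)) UNIV"
      unfolding eq has_integral_restrict_UNIV by (rule has_integral_powr_to_inf[OF e]) simp
    then have "integral\<^sup>N lborel (\<lambda>x. indicator {1..} x * x powr e) = -(1 powr (e+1)) / (e+1)"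
      by (intro nn_integral_has_integral_lborel) auto
    then show ?thesis by simp
  qed
  have tail': "(\<integral>\<^sup>+x. ennreal (indicator {..-1} x * (-x) powr e) \<partial>lborel) < \<infinity>"
  proof -
    have "(\<integral>\<^sup>+x. ennreal (indicator {..-1} x * (-x) powr e) \<partial>lborel)
        = (\<integral>\<^sup>+x. ennreal (indicator {1..} x * x powr e) \<partial>distr lborel borel uminus)"
      by (subst nn_integral_distr) (auto intro!: nn_integral_cong simp: indicator_def)
    with tail show ?thesis by (simp add: lborel_distr_uminus)
  qed
  have le: "(1 + x\<^sup>2) powr (-a)
      \<le> indicator {-1..1} x + indicator {1..} x * x powr e + indicator {..-1} x * (-x) powr e" for x :: real
  proof (cases "\<bar>x\<bar> \<le> 1")
    case True
    have "1 \<le> (1 + x\<^sup>2) powr a" using a by (intro ge_one_powr_ge_zero) auto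
    then have "(1 + x\<^sup>2) powr (-a) \<le> 1" by (simp add: powr_minus inverse_le_1_iff)
    with True show ?thesis by (auto simp: indicator_def abs_le_iff)
  next
    case False
    have "(1 + x\<^sup>2) powr (-a) \<le> (x\<^sup>2) powr (-a)"
      using False a by (intro powr_mono2') auto
    also have "x\<^sup>2 = \<bar>x\<bar> powr 2"
      using False by (simp add: powr_realpow)
    also have "(\<bar>x\<bar> powr 2) powr (-a) = \<bar>x\<bar> powr e"
      unfolding powr_powr e_def by simp
    finally show ?thesis using False by (auto simp: indicator_def)
  qed
  have "(\<integral>\<^sup>+x. ennreal ((1 + x\<^sup>2) powr (-a)) \<partial>lborel)
      \<le> (\<integral>\<^sup>+x. ennreal (indicator {-1..1} x) + ennreal (indicator {1..} x * x powr e)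
                 + ennreal (indicator {..-1} x * (-x) powr e) \<partial>lborel)"
    using le by (intro nn_integral_mono) (simp flip: ennreal_plus)
  also have "\<dots> = emeasure lborel {-1..1::real} + (\<integral>\<^sup>+x. ennreal (indicator {1..} x * x powr e) \<partial>lborel)
      + (\<integral>\<^sup>+x. ennreal (indicator {..-1} x * (-x) powr e) \<partial>lborel)"
    by (subst nn_integral_add, measurable)+ (simp add: ennreal_indicator)
  also have "\<dots> < \<infinity>"
    using tail tail' by (simp add: ennreal_add_less_top)
  finally show ?thesis .
qed

lemma nn_integral_one_plus_norm_sq_powr_finite:
  fixes s :: real
  assumes s: "s > DIM('a::euclidean_space) / 2"
  shows "(\<integral>\<^sup>+k. ennreal ((1 + (norm (k::'a))\<^sup>2) powr (-s)) \<partial>lborel) < \<infinity>"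
proof -
  define t where "t = s / DIM('a)"
  have t: "t > 1/2" using s by (simp add: t_def field_simps)
  define g where "g x = (1 + x\<^sup>2) powr (-t)" for x :: real
  \<comment> \<open>The radial weight is dominated by a product of one-dimensional weights,
     since every coordinate is bounded by the norm.\<close>
  have le: "(1 + (norm k)\<^sup>2) powr (-s) \<le> (\<Prod>b\<in>Basis. g (k \<bullet> b))" for k :: 'a
  proof -
    have "(1 + (norm k)\<^sup>2) powr (-s) = ((1 + (norm k)\<^sup>2) powr (-t)) ^ DIM('a)"
      by (subst powr_power) (auto simp: t_def add_pos_nonneg[THEN less_imp_neq, symmetric])
    also have "\<dots> = (\<Prod>b\<in>(Basis::'a set). (1 + (norm k)\<^sup>2) powr (-t))" by simp
    also have "\<dots> \<le> (\<Prod>b\<in>Basis. g (k \<bullet> b))"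
    proof (intro prod_mono conjI)
      fix b :: 'a assume b: "b \<in> Basis"
      have "(k \<bullet> b)\<^sup>2 \<le> (norm k)\<^sup>2" using Basis_le_norm[OF b, of k]
        by (metis abs_ge_zero power2_abs power_mono)
      then show "(1 + (norm k)\<^sup>2) powr (-t) \<le> g (k \<bullet> b)" unfolding g_def
        using t by (intro powr_mono2') (auto intro: add_pos_nonneg)
    qed simp
    finally show ?thesis .
  qed
  have "(\<integral>\<^sup>+k. ennreal ((1 + (norm (k::'a))\<^sup>2) powr (-s)) \<partial>lborel)
      \<le> (\<integral>\<^sup>+k. (\<Prod>b\<in>Basis. ennreal (g ((k::'a) \<bullet> b))) \<partial>lborel)"
    by (intro nn_integral_mono) (simp add: prod_ennreal g_def ennreal_leI le[unfolded g_def])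
  also have "\<dots> = (\<Prod>b\<in>(Basis::'a set). (\<integral>\<^sup>+x. ennreal (g x) \<partial>lborel))"
    by (rule nn_integral_lborel_prod[where f="\<lambda>b x. ennreal (g x)"]) (auto simp: g_def)
  also have "\<dots> = (\<integral>\<^sup>+x. ennreal (g x) \<partial>lborel) ^ DIM('a)" by simp
  also have "\<dots> < \<infinity>"
    using nn_integral_one_plus_sq_powr_finite[OF t] unfolding g_def
    by (simp add: power_less_top_ennreal less_top)
  finally show ?thesis .
qed

lemma integrable_bounded_by_one_plus_norm_sq_powr:
  fixes f :: "'a::euclidean_space \<Rightarrow> real"
  assumes [measurable]: "f \<in> borel_measurable borel"
    and s: "s > DIM('a) / 2" and C: "C \<ge> 0"
    and le: "\<And>k. \<bar>f k\<bar> \<le> C * (1 + (norm k)\<^sup>2) powr (-s)"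
  shows "integrable lborel f"
proof (rule integrableI_bounded)
  have "(\<integral>\<^sup>+k. ennreal (norm (f k)) \<partial>lborel)
      \<le> (\<integral>\<^sup>+k. ennreal C * ennreal ((1 + (norm (k::'a))\<^sup>2) powr (-s)) \<partial>lborel)"
  proof (intro nn_integral_mono)
    fix k
    have "ennreal (norm (f k)) \<le> ennreal (C * (1 + (norm k)\<^sup>2) powr (-s))"
      using le[of k] by (intro ennreal_leI) simp
    then show "ennreal (norm (f k)) \<le> ennreal C * ennreal ((1 + (norm k)\<^sup>2) powr (-s))"
      using C by (simp add: ennreal_mult)
  qed
  also have "\<dots> = ennreal C * (\<integral>\<^sup>+k. ennreal ((1 + (norm (k::'a))\<^sup>2) powr (-s)) \<partial>lborel)"
    by (rule nn_integral_cmult) measurable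
  also have "\<dots> < \<infinity>"
    using nn_integral_one_plus_norm_sq_powr_finite[OF s] by (simp add: ennreal_mult_less_top)
  finally show "(\<integral>\<^sup>+k. ennreal (norm (f k)) \<partial>lborel) < \<infinity>" .
qed simp

lemma spec_dens_measurable[measurable]: "spec_dens n1 \<alpha> \<kappa> n2 b B \<in> borel_measurable borel"
  unfolding spec_dens_def[abs_def] by measurable

lemma spec_dens_nonneg:
  assumes "\<forall>i<n1. (\<kappa> i)\<^sup>2 > 0"
  shows "spec_dens n1 \<alpha> \<kappa> n2 b B k \<ge> 0"
  unfolding spec_dens_def using assms
  by (intro divide_nonneg_pos prod_nonneg prod_pos zero_less_power) (auto intro: add_pos_nonneg)

lemma spec_dens_le:
  fixes \<kappa> b :: "nat \<Rightarrow> real" and B :: "nat \<Rightarrow> real^'d"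
  assumes kap: "\<forall>i<n1. (\<kappa> i)\<^sup>2 > 0"
  obtains C where "C \<ge> 0"
    "\<And>k. spec_dens n1 \<alpha> \<kappa> n2 b B k \<le> C * (1 + (norm k)\<^sup>2) powr (real n2 - real (\<Sum>i<n1. \<alpha> i))"
proof -
  define m where "m i = min ((\<kappa> i)\<^sup>2) 1" for i
  have m: "0 < m i" "m i \<le> 1" if "i < n1" for i using kap that by (auto simp: m_def)
  define c where "c j = (b j)\<^sup>2 + (norm (B j))\<^sup>2" for j
  define C where "C = (\<Prod>j<n2. c j) / (\<Prod>i<n1. m i ^ \<alpha> i)"
  have C: "C \<ge> 0" unfolding C_def c_def using m by (intro divide_nonneg_pos prod_nonneg prod_pos) auto
  \<comment> \<open>With u = 1 + |k|^2, each numerator factor is at most c j * u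
     and each denominator factor at least (m i * u) ^ \<alpha> i.\<close>
  have "spec_dens n1 \<alpha> \<kappa> n2 b B k \<le> C * (1 + (norm k)\<^sup>2) powr (real n2 - real (\<Sum>i<n1. \<alpha> i))" for k
  proof -
    define u where "u = 1 + (norm k)\<^sup>2"
    have u: "u \<ge> 1" by (simp add: u_def)
    have num: "(\<Prod>j<n2. (b j)\<^sup>2 + (B j \<bullet> k)\<^sup>2) \<le> (\<Prod>j<n2. c j * u)"
    proof (intro prod_mono conjI)
      fix j
      have "(B j \<bullet> k)\<^sup>2 \<le> (norm (B j) * norm k)\<^sup>2"
        by (metis abs_ge_zero Cauchy_Schwarz_ineq2 power2_abs power_mono)
      then show "(b j)\<^sup>2 + (B j \<bullet> k)\<^sup>2 \<le> c j * u"
        unfolding c_def u_def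
        by (simp add: algebra_simps power_mult_distrib) (simp add: add_increasing)
    qed auto
    have den: "(\<Prod>i<n1. (m i * u) ^ \<alpha> i) \<le> (\<Prod>i<n1. ((\<kappa> i)\<^sup>2 + (norm k)\<^sup>2) ^ \<alpha> i)"
    proof (intro prod_mono conjI)
      fix i assume "i \<in> {..<n1}"
      then have i: "i < n1" by simp
      have "m i * u \<le> (\<kappa> i)\<^sup>2 + (norm k)\<^sup>2"
        using m[OF i] kap i unfolding u_def m_def
        by (auto simp: min_def algebra_simps intro: mult_left_le)
      then show "(m i * u) ^ \<alpha> i \<le> ((\<kappa> i)\<^sup>2 + (norm k)\<^sup>2) ^ \<alpha> i"
        using m[OF i] u by (intro power_mono) auto
      show "0 \<le> (m i * u) ^ \<alpha> i" using m[OF i] u by simp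
    qed
    have "(\<Prod>i<n1. (m i * u) ^ \<alpha> i) = (\<Prod>i<n1. m i ^ \<alpha> i) * u ^ (\<Sum>i<n1. \<alpha> i)"
      by (simp add: power_mult_distrib prod.distrib power_sum)
    moreover have "(\<Prod>j<n2. c j * u) = (\<Prod>j<n2. c j) * u ^ n2"
      by (simp add: prod.distrib)
    moreover have "0 < (\<Prod>i<n1. m i ^ \<alpha> i)" using m by (intro prod_pos) auto
    moreover have "0 \<le> (\<Prod>j<n2. (b j)\<^sup>2 + (B j \<bullet> k)\<^sup>2)" by (intro prod_nonneg) auto
    ultimately have "spec_dens n1 \<alpha> \<kappa> n2 b B k
        \<le> ((\<Prod>j<n2. c j) * u ^ n2) / ((\<Prod>i<n1. m i ^ \<alpha> i) * u ^ (\<Sum>i<n1. \<alpha> i))"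
      unfolding spec_dens_def using num den u by (intro frac_le) auto
    also have "\<dots> = C * (u ^ n2 / u ^ (\<Sum>i<n1. \<alpha> i))" by (simp add: C_def)
    also have "u ^ n2 / u ^ (\<Sum>i<n1. \<alpha> i) = u powr (real n2 - real (\<Sum>i<n1. \<alpha> i))"
      using u by (simp only: powr_diff powr_realpow[of u])
    finally show ?thesis by (simp add: u_def)
  qed
  with C that show ?thesis by blast
qed

lemma sqrt_le_one_plus_sq_powr:
  fixes x :: real
  assumes "0 \<le> x"
  shows "sqrt x \<le> (1 + x\<^sup>2) powr (1/4)"
proof -
  have "sqrt x = (x\<^sup>2) powr (1/4)"
  proof (cases "x = 0")
    case True
    then show ?thesis by simp
  next
    case False
    with assms have "x\<^sup>2 = x powr 2" by (simp add: powr_realpow)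
    then have "(x\<^sup>2) powr (1/4) = (x powr 2) powr (1/4)" by (simp only:)
    also have "\<dots> = sqrt x" unfolding powr_powr using assms by (simp add: powr_half_sqrt)
    finally show ?thesis ..
  qed
  also have "\<dots> \<le> (1 + x\<^sup>2) powr (1/4)" by (intro powr_mono2) auto
  finally show ?thesis .
qed

lemma integrable_spec_dens:
  fixes \<kappa> b :: "nat \<Rightarrow> real" and B :: "nat \<Rightarrow> real^'d"
  assumes kap: "\<forall>i<n1. (\<kappa> i)\<^sup>2 > 0"
    and decay: "2 * int (\<Sum>i<n1. \<alpha> i) - 2 * int n2 > int CARD('d)"
  shows "integrable lborel (spec_dens n1 \<alpha> \<kappa> n2 b B)"
    and "integrable lborel (\<lambda>k. sqrt (norm k) * spec_dens n1 \<alpha> \<kappa> n2 b B k)"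
proof -
  define f where "f = spec_dens n1 \<alpha> \<kappa> n2 b B"
  define N where "N = real (\<Sum>i<n1. \<alpha> i) - real n2"
  obtain C where C: "C \<ge> 0" and le: "\<And>k. f k \<le> C * (1 + (norm k)\<^sup>2) powr (-N)"
    using spec_dens_le[OF kap] unfolding f_def N_def by (metis minus_diff_eq)
  have f0: "f k \<ge> 0" for k unfolding f_def by (rule spec_dens_nonneg[OF kap])
  have "real_of_int (int CARD('d) + 1) \<le> real_of_int (2 * int (\<Sum>i<n1. \<alpha> i) - 2 * int n2)"
    using decay by (simp only: of_int_le_iff)
  then have N: "2 * N \<ge> real CARD('d) + 1" unfolding N_def by simp
  show "integrable lborel (spec_dens n1 \<alpha> \<kappa> n2 b B)"
    unfolding f_def[symmetric]
    by (rule integrable_bounded_by_one_plus_norm_sq_powr[where s=N and C=C])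
      (use N C le f0 in \<open>auto simp: f_def\<close>)
  have "sqrt (norm k) * f k \<le> C * (1 + (norm k)\<^sup>2) powr (-(N - 1/4))" for k :: "real^'d"
  proof -
    have "sqrt (norm k) * f k \<le> (1 + (norm k)\<^sup>2) powr (1/4) * (C * (1 + (norm k)\<^sup>2) powr (-N))"
      using f0[of k] le[of k] by (intro mult_mono sqrt_le_one_plus_sq_powr) auto
    then show ?thesis by (simp add: powr_add[symmetric] algebra_simps)
  qed
  then show "integrable lborel (\<lambda>k. sqrt (norm k) * spec_dens n1 \<alpha> \<kappa> n2 b B k)"
    unfolding f_def[symmetric]
    by (intro integrable_bounded_by_one_plus_norm_sq_powr[where s="N - 1/4" and C=C])
      (use N C f0 in \<open>auto simp: f_def\<close>)
qed

section \<open>Increments of a stationary Gaussian field\<close>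

lemma gaussian_rvE:
  assumes "gaussian_rv M Z"
  obtains mu sigma where "sigma > 0" "distributed M lborel Z (normal_density mu sigma)"
    | mu where "AE \<omega> in M. Z \<omega> = mu"
proof -
  have Z: "Z \<in> borel_measurable M" using assms by (simp add: gaussian_rv_def)
  from assms obtain mu sigma where
    "(sigma > 0 \<and> distributed M lborel Z (\<lambda>x. ennreal (normal_density mu sigma x)))
       \<or> distr M borel Z = return borel mu"
    by (auto simp: gaussian_rv_def)
  then show ?thesis
  proof
    assume R: "distr M borel Z = return borel mu"
    have "AE x in distr M borel Z. x = mu" unfolding R by (subst AE_return) auto
    then have "AE \<omega> in M. Z \<omega> = mu" by (rule AE_distrD[OF Z])
    then show ?thesis by (rule that(2))
  qed (use that(1) in blast)
qed

lemma gaussian_rv_integrable: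
  assumes "prob_space M" "gaussian_rv M Z"
  shows "integrable M Z"
  using assms(2)
proof (cases rule: gaussian_rvE)
  case (1 mu sigma)
  then show ?thesis
    using distributed_integrable[OF 1(2), of "\<lambda>x. x"] integrable_normal_moment_nz_1[of sigma mu]
    by simp
next
  case (2 mu)
  interpret prob_space M by fact
  show ?thesis
    by (rule integrable_cong_AE_imp[where g="\<lambda>_. mu"]) (use 2 assms(2) in \<open>auto simp: gaussian_rv_def\<close>)
qed

lemma centred_gaussian_even_moment:
  assumes "prob_space M" "gaussian_rv M Z" "(\<integral>\<omega>. Z \<omega> \<partial>M) = 0"
  shows "integrable M (\<lambda>\<omega>. Z \<omega> ^ (2*m))"
    and "(\<integral>\<omega>. Z \<omega> ^ (2*m) \<partial>M) = fact (2*m) / (2^m * fact m) * (\<integral>\<omega>. Z \<omega> ^ 2 \<partial>M) ^ m"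
proof -
  interpret prob_space M by fact
  have "integrable M (\<lambda>\<omega>. Z \<omega> ^ (2*m)) \<and>
    (\<integral>\<omega>. Z \<omega> ^ (2*m) \<partial>M) = fact (2*m) / (2^m * fact m) * (\<integral>\<omega>. Z \<omega> ^ 2 \<partial>M) ^ m"
    using assms(2)
  proof (cases rule: gaussian_rvE)
    case (1 mu sigma)
    have "mu = 0" using normal_distributed_expectation[OF 1] assms(3) by simp
    have moment: "integrable M (\<lambda>\<omega>. Z \<omega> ^ (2*j)) \<and>
        (\<integral>\<omega>. Z \<omega> ^ (2*j) \<partial>M) = fact (2 * j) / ((2 / sigma\<^sup>2)^j * fact j)" for j
    proof -
      have hb: "has_bochner_integral lborel (\<lambda>x. normal_density mu sigma x * x ^ (2*j))
          (fact (2 * j) / ((2 / sigma\<^sup>2)^j * fact j))"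
        using normal_moment_even[OF 1(1), of 0 j] \<open>mu = 0\<close> by simp
      then show ?thesis
        using distributed_integrable[OF 1(2), of "\<lambda>x. x ^ (2*j)"]
          distributed_integral[OF 1(2), of "\<lambda>x. x ^ (2*j)"]
        by (simp add: has_bochner_integral_iff)
    qed
    then have "(\<integral>\<omega>. Z \<omega> ^ 2 \<partial>M) = sigma\<^sup>2" using moment[of 1] by simp
    then show ?thesis using moment[of m] 1(1)
      by (simp add: power_divide field_simps power_mult_distrib flip: power_mult)
  next
    case (2 mu)
    have Z: "Z \<in> borel_measurable M" using assms(2) by (simp add: gaussian_rv_def)
    have "(\<integral>\<omega>. Z \<omega> \<partial>M) = mu" using integral_cong_AE[OF Z _ 2] by (simp add: prob_space)
    with assms(3) have ae: "AE \<omega> in M. Z \<omega> ^ j = 0 ^ j" for j using 2 by auto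
    have int: "integrable M (\<lambda>\<omega>. Z \<omega> ^ j)" for j
      by (rule integrable_cong_AE_imp[where g="\<lambda>_. 0 ^ j"]) (use ae Z in \<open>auto simp: eq_commute\<close>)
    have "(\<integral>\<omega>. Z \<omega> ^ j \<partial>M) = 0 ^ j" for j
      using integral_cong_AE[OF _ _ ae] Z by (simp add: prob_space)
    from int[of "2*m"] this[of "2*m"] this[of 2] show ?thesis
      by (cases m) (simp_all add: prob_space)
  qed
  then show "integrable M (\<lambda>\<omega>. Z \<omega> ^ (2*m))"
    and "(\<integral>\<omega>. Z \<omega> ^ (2*m) \<partial>M) = fact (2*m) / (2^m * fact m) * (\<integral>\<omega>. Z \<omega> ^ 2 \<partial>M) ^ m"
    by auto
qed

lemma gaussian_field_gaussian_rv:
  assumes "gaussian_field M X"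
  shows "gaussian_rv M (X s)"
  using assms[unfolded gaussian_field_def, rule_format, of "{s}" "\<lambda>_. 1"] by simp

lemma gaussian_field_gaussian_rv_diff:
  assumes "gaussian_field M X"
  shows "gaussian_rv M (\<lambda>\<omega>. X s \<omega> - X t \<omega>)"
proof (cases "s = t")
  case True
  then show ?thesis using assms[unfolded gaussian_field_def, rule_format, of "{}"] by simp
next
  case False
  then show ?thesis
    using assms[unfolded gaussian_field_def, rule_format, of "{s, t}" "\<lambda>r. if r = s then 1 else -1"]
    by simp
qed

lemma one_minus_cos_le_sqrt: "1 - cos x \<le> 2 * sqrt \<bar>x\<bar>"
proof -
  define a where "a = \<bar>sin (x/2)\<bar>"
  have a: "0 \<le> a" "a \<le> 1" "a \<le> \<bar>x\<bar>/2"
    using abs_sin_x_le_abs_x[of "x/2"] by (auto simp: a_def)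
  have "cos x = cos (2 * (x/2))" by simp
  also have "\<dots> = 1 - 2 * a\<^sup>2" by (simp only: cos_double_sin a_def power2_abs)
  finally have "1 - cos x = 2 * a\<^sup>2" by simp
  moreover have "a\<^sup>2 \<le> sqrt a"
  proof -
    have "a * a \<le> a" using a by (simp add: mult_left_le)
    moreover from this have "sqrt (a * a) \<le> sqrt a" by (rule real_sqrt_le_mono)
    ultimately show ?thesis using a by (simp add: power2_eq_square)
  qed
  moreover have "sqrt a \<le> sqrt \<bar>x\<bar>" using a by (intro real_sqrt_le_mono) simp
  ultimately show ?thesis by linarith
qed

lemma one_minus_cos_inner_le:
  fixes k h :: "'a::real_inner"
  shows "1 - cos (k \<bullet> h) \<le> 2 * sqrt (norm h) * sqrt (norm k)"
proof -
  have "sqrt \<bar>k \<bullet> h\<bar> \<le> sqrt (norm h) * sqrt (norm k)"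
    using Cauchy_Schwarz_ineq2[of k h] by (metis mult.commute real_sqrt_le_mono real_sqrt_mult)
  with one_minus_cos_le_sqrt[of "k \<bullet> h"] show ?thesis by simp
qed

lemma stationary_gaussian_increment_variance_le:
  fixes X :: "real^'d \<Rightarrow> 'a \<Rightarrow> real"
  assumes "prob_space M"
    and SG: "stationary_gaussian_with_spectral_density M X f"
    and f0: "\<And>k. f k \<ge> 0"
    and int_f: "integrable lborel f"
    and int_sqrt_f: "integrable lborel (\<lambda>k. sqrt (norm k) * f k)"
  obtains A where "A \<ge> 0"
    and "\<And>s t. integrable M (\<lambda>\<omega>. (X s \<omega> - X t \<omega>)\<^sup>2)"
    and "\<And>s t. (\<integral>\<omega>. (X s \<omega> - X t \<omega>)\<^sup>2 \<partial>M) \<le> A * sqrt (norm (s - t))"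
proof -
  interpret prob_space M by fact
  from SG obtain c where c: "c > 0" and cov: "\<And>s t. integrable M (\<lambda>\<omega>. X s \<omega> * X t \<omega>)"
    "\<And>s t. (\<integral>\<omega>. X s \<omega> * X t \<omega> \<partial>M) = c * (\<integral>k. cos (k \<bullet> (s - t)) * f k \<partial>lborel)"
    unfolding stationary_gaussian_with_spectral_density_def by blast
  have [measurable]: "f \<in> borel_measurable borel"
    using borel_measurable_integrable[OF int_f] by simp
  define I where "I = (\<integral>k. sqrt (norm k) * f k \<partial>lborel)"
  have "I \<ge> 0" unfolding I_def using f0 by (intro integral_nonneg_AE) auto
  have int_cos: "integrable lborel (\<lambda>k. cos (k \<bullet> h) * f k)" for h
    by (rule Bochner_Integration.integrable_bound[OF int_f])
      (use f0 in \<open>simp_all add: abs_mult mult_left_le_one_le\<close>)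
  have int_one_minus_cos: "integrable lborel (\<lambda>k. (1 - cos (k \<bullet> h)) * f k)" for h
    using int_f int_cos[of h] by (simp add: left_diff_distrib)
  have sq: "(\<lambda>\<omega>. (X s \<omega> - X t \<omega>)\<^sup>2) = (\<lambda>\<omega>. X s \<omega> * X s \<omega> + X t \<omega> * X t \<omega> - 2 * (X s \<omega> * X t \<omega>))"
    for s t by (auto simp: power2_eq_square algebra_simps)
  show ?thesis
  proof
    show "0 \<le> 4 * c * I" using c \<open>I \<ge> 0\<close> by simp
    show "integrable M (\<lambda>\<omega>. (X s \<omega> - X t \<omega>)\<^sup>2)" for s t
      unfolding sq using cov(1) by simp
    fix s t :: "real^'d"
    have "(\<integral>\<omega>. (X s \<omega> - X t \<omega>)\<^sup>2 \<partial>M) = c * (\<integral>k. f k \<partial>lborel) + c * (\<integral>k. f k \<partial>lborel)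
        - 2 * (c * (\<integral>k. cos (k \<bullet> (s - t)) * f k \<partial>lborel))"
      unfolding sq using cov by simp
    also have "\<dots> = 2 * c * (\<integral>k. (1 - cos (k \<bullet> (s - t))) * f k \<partial>lborel)"
      using int_f int_cos[of "s - t"] by (simp add: left_diff_distrib algebra_simps)
    also have "(\<integral>k. (1 - cos (k \<bullet> (s - t))) * f k \<partial>lborel)
        \<le> (\<integral>k. 2 * sqrt (norm (s - t)) * (sqrt (norm k) * f k) \<partial>lborel)"
    proof (rule integral_mono)
      show "integrable lborel (\<lambda>k. 2 * sqrt (norm (s - t)) * (sqrt (norm k) * f k))"
        using int_sqrt_f by simp
      show "(1 - cos (k \<bullet> (s - t))) * f k \<le> 2 * sqrt (norm (s - t)) * (sqrt (norm k) * f k)" for k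
        using mult_right_mono[OF one_minus_cos_inner_le[of k "s - t"] f0[of k]] by (simp add: ac_simps)
    qed (rule int_one_minus_cos)
    also have "\<dots> = 2 * sqrt (norm (s - t)) * I" unfolding I_def by simp
    finally show "(\<integral>\<omega>. (X s \<omega> - X t \<omega>)\<^sup>2 \<partial>M) \<le> 4 * c * I * sqrt (norm (s - t))"
      using c by (simp add: mult_left_mono algebra_simps)
  qed
qed

lemma stationary_gaussian_increment_moment_le:
  fixes X :: "real^'d \<Rightarrow> 'a \<Rightarrow> real"
  assumes P: "prob_space M"
    and SG: "stationary_gaussian_with_spectral_density M X f"
    and "\<And>k. f k \<ge> 0" "integrable lborel f" "integrable lborel (\<lambda>k. sqrt (norm k) * f k)"
  obtains C where "C \<ge> 0"
    and "\<And>s t. integrable M (\<lambda>\<omega>. (X s \<omega> - X t \<omega>) ^ (8*m))"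
    and "\<And>s t. (\<integral>\<omega>. (X s \<omega> - X t \<omega>) ^ (8*m) \<partial>M) \<le> C * norm (s - t) ^ (2*m)"
proof -
  interpret prob_space M by (rule P)
  obtain A where A: "A \<ge> 0" and "\<And>s t. integrable M (\<lambda>\<omega>. (X s \<omega> - X t \<omega>)\<^sup>2)"
    and var: "\<And>s t. (\<integral>\<omega>. (X s \<omega> - X t \<omega>)\<^sup>2 \<partial>M) \<le> A * sqrt (norm (s - t))"
    using stationary_gaussian_increment_variance_le[OF assms] by blast
  from SG have GF: "gaussian_field M X" and mean: "\<And>s. (\<integral>\<omega>. X s \<omega> \<partial>M) = 0"
    unfolding stationary_gaussian_with_spectral_density_def by blast+
  define K :: real where "K = fact (2 * (4*m)) / (2 ^ (4*m) * fact (4*m))"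
  have "K \<ge> 0" by (simp add: K_def)
  show ?thesis
  proof
    show "0 \<le> K * A ^ (4*m)" using \<open>K \<ge> 0\<close> A by simp
    fix s t :: "real^'d"
    have Z: "gaussian_rv M (\<lambda>\<omega>. X s \<omega> - X t \<omega>)" by (rule gaussian_field_gaussian_rv_diff[OF GF])
    have "(\<integral>\<omega>. X s \<omega> - X t \<omega> \<partial>M) = 0"
      using mean gaussian_rv_integrable[OF P gaussian_field_gaussian_rv[OF GF]] by simp
    note moment = centred_gaussian_even_moment[OF P Z this, of "4*m"]
    show "integrable M (\<lambda>\<omega>. (X s \<omega> - X t \<omega>) ^ (8*m))"
      using moment(1) by (simp add: mult.assoc)
    have "(\<integral>\<omega>. (X s \<omega> - X t \<omega>)\<^sup>2 \<partial>M) ^ (4*m) \<le> (A * sqrt (norm (s - t))) ^ (4*m)"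
      using var[of s t] by (intro power_mono) auto
    also have "\<dots> = A ^ (4*m) * norm (s - t) ^ (2*m)"
      using power_mult[of "sqrt (norm (s - t))" 2 "2*m"] by (simp add: power_mult_distrib)
    finally have "K * (\<integral>\<omega>. (X s \<omega> - X t \<omega>)\<^sup>2 \<partial>M) ^ (4*m) \<le> K * (A ^ (4*m) * norm (s - t) ^ (2*m))"
      using \<open>K \<ge> 0\<close> by (rule mult_left_mono)
    then show "(\<integral>\<omega>. (X s \<omega> - X t \<omega>) ^ (8*m) \<partial>M) \<le> K * A ^ (4*m) * norm (s - t) ^ (2*m)"
      using moment(2) by (simp add: K_def mult.assoc)
  qed
qed

section \<open>Dyadic approximation\<close>

lemma abs_floor_le: "\<bar>x\<bar> \<le> of_int c \<Longrightarrow> \<bar>\<lfloor>x\<rfloor>\<bar> \<le> c" for x :: real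
  by linarith

lemma abs_floor_diff_le_one: "\<bar>x - y\<bar> \<le> 1 \<Longrightarrow> \<bar>\<lfloor>x\<rfloor> - \<lfloor>y\<rfloor>\<bar> \<le> 1" for x y :: real
  by linarith

lemma floor_double_bounds: "2 * \<lfloor>y\<rfloor> \<le> \<lfloor>2 * y\<rfloor> \<and> \<lfloor>2 * y\<rfloor> \<le> 2 * \<lfloor>y\<rfloor> + 1" for y :: real
proof
  show "2 * \<lfloor>y\<rfloor> \<le> \<lfloor>2 * y\<rfloor>" by (simp add: le_floor_iff)
  have "real_of_int \<lfloor>2 * y\<rfloor> < 2 * of_int \<lfloor>y\<rfloor> + 2" by linarith
  then show "\<lfloor>2 * y\<rfloor> \<le> 2 * \<lfloor>y\<rfloor> + 1" by linarith
qed

lemma norm_le_card_mult: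
  fixes x :: "real^'d"
  assumes "\<forall>i. \<bar>x$i\<bar> \<le> e"
  shows "norm x \<le> real CARD('d) * e"
proof -
  have "norm x \<le> (\<Sum>i\<in>UNIV. \<bar>x$i\<bar>)" by (rule norm_le_l1_cart)
  also have "\<dots> \<le> (\<Sum>i\<in>(UNIV::'d set). e)" using assms by (intro sum_mono) auto
  finally show ?thesis by simp
qed

lemma components_le_if_norm_le: "norm s \<le> c \<Longrightarrow> \<forall>i. \<bar>s$i\<bar> \<le> c"
  for s :: "real^'d"
  using component_le_norm_cart[of s] by (meson order_trans)

definition dyadic_trunc :: "nat \<Rightarrow> real^'d \<Rightarrow> real^'d" where
  "dyadic_trunc n s = (\<chi> i. of_int \<lfloor>2^n * s$i\<rfloor> / 2^n)"

definition dyadic_grid :: "nat \<Rightarrow> nat \<Rightarrow> (real^'d) set" where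
  "dyadic_grid K n = {p. \<forall>i. \<exists>z::int. p$i = of_int z / 2^n \<and> \<bar>z\<bar> \<le> int K * 2^n}"

definition dyadic_neighbours :: "nat \<Rightarrow> nat \<Rightarrow> ((real^'d) \<times> (real^'d)) set" where
  "dyadic_neighbours K n =
     {(p, q). p \<in> dyadic_grid K n \<and> q \<in> dyadic_grid K n \<and> (\<forall>i. \<bar>p$i - q$i\<bar> \<le> 1/2^n)}"

lemma dyadic_grid_subset_image:
  "dyadic_grid K n \<subseteq> (\<lambda>z. \<chi> i. of_int (z i) / 2^n) ` (PiE UNIV (\<lambda>_. {-(int K * 2^n)..int K * 2^n}))"
proof
  fix p :: "real^'d" assume "p \<in> dyadic_grid K n"
  then have "\<forall>i. \<exists>z::int. p$i = of_int z / 2^n \<and> \<bar>z\<bar> \<le> int K * 2^n" by (simp add: dyadic_grid_def)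
  then obtain z where z: "\<And>i. p$i = of_int (z i) / 2^n \<and> \<bar>z i\<bar> \<le> int K * 2^n" by metis
  then have "p = (\<chi> i. of_int (z i) / 2^n)" by (simp add: vec_eq_iff)
  moreover have "z \<in> PiE UNIV (\<lambda>_. {-(int K * 2^n)..int K * 2^n})"
    using z by (force simp: abs_le_iff)
  ultimately show "p \<in> (\<lambda>z. \<chi> i. of_int (z i) / 2^n) ` (PiE UNIV (\<lambda>_. {-(int K * 2^n)..int K * 2^n}))"
    by blast
qed

lemma finite_dyadic_grid: "finite (dyadic_grid K n :: (real^'d) set)"
  by (rule finite_subset[OF dyadic_grid_subset_image]) (auto intro!: finite_PiE)

lemma card_dyadic_grid_le: "card (dyadic_grid K n :: (real^'d) set) \<le> (2 * K * 2^n + 1) ^ CARD('d)"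
proof -
  let ?Z = "PiE (UNIV::'d set) (\<lambda>_. {-(int K * 2^n)..int K * 2^n})"
  have "card (dyadic_grid K n :: (real^'d) set) \<le> card ((\<lambda>z. (\<chi> i. of_int (z i) / 2^n) :: real^'d) ` ?Z)"
    by (intro card_mono dyadic_grid_subset_image) (auto intro!: finite_PiE)
  also have "\<dots> \<le> card ?Z" by (rule card_image_le) (auto intro!: finite_PiE)
  also have "\<dots> = (\<Prod>i\<in>(UNIV::'d set). card {-(int K * 2^n)..int K * 2^n})"
    by (rule card_PiE) simp
  also have "\<dots> = (2 * K * 2^n + 1) ^ CARD('d)"
    by (simp add: card_atLeastAtMost_int nat_add_distrib nat_mult_distrib nat_power_eq ac_simps)
  finally show ?thesis .
qed

lemma finite_dyadic_neighbours: "finite (dyadic_neighbours K n :: ((real^'d) \<times> (real^'d)) set)"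
  by (rule finite_subset[of _ "dyadic_grid K n \<times> dyadic_grid K n"])
    (auto simp: dyadic_neighbours_def finite_dyadic_grid)

lemma card_dyadic_neighbours_le:
  "card (dyadic_neighbours K n :: ((real^'d) \<times> (real^'d)) set) \<le> (2 * K * 2^n + 1) ^ (2 * CARD('d))"
proof -
  have "card (dyadic_neighbours K n :: ((real^'d) \<times> (real^'d)) set)
      \<le> card (dyadic_grid K n \<times> dyadic_grid K n :: ((real^'d) \<times> (real^'d)) set)"
    by (intro card_mono) (auto simp: dyadic_neighbours_def finite_dyadic_grid)
  also have "\<dots> = card (dyadic_grid K n :: (real^'d) set) ^ 2"
    by (simp add: card_cartesian_product power2_eq_square)
  also have "\<dots> \<le> ((2 * K * 2^n + 1) ^ CARD('d)) ^ 2" by (intro power_mono card_dyadic_grid_le) simp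
  finally show ?thesis by (simp add: power_mult[symmetric] mult.commute)
qed

lemma dyadic_trunc_in_grid:
  assumes "\<forall>i. \<bar>s$i\<bar> \<le> real K"
  shows "dyadic_trunc n s \<in> dyadic_grid K n"
  unfolding dyadic_grid_def
proof safe
  fix i
  have "\<bar>2^n * s$i\<bar> \<le> real K * 2^n" using assms by (simp add: abs_mult mult.commute)
  then have "\<bar>\<lfloor>2^n * s$i\<rfloor>\<bar> \<le> int K * 2^n" by (intro abs_floor_le) simp
  then show "\<exists>z. dyadic_trunc n s $ i = real_of_int z / 2 ^ n \<and> \<bar>z\<bar> \<le> int K * 2 ^ n"
    by (auto simp: dyadic_trunc_def)
qed

lemma dyadic_trunc_Suc_neighbours:
  assumes "\<forall>i. \<bar>s$i\<bar> \<le> real K"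
  shows "(dyadic_trunc n s, dyadic_trunc (Suc n) s) \<in> dyadic_neighbours K (Suc n)"
proof -
  have "dyadic_trunc n s \<in> dyadic_grid K (Suc n)"
    unfolding dyadic_grid_def
  proof safe
    fix i
    have "\<bar>2^n * s$i\<bar> \<le> real K * 2^n" using assms by (simp add: abs_mult mult.commute)
    then have "\<bar>\<lfloor>2^n * s$i\<rfloor>\<bar> \<le> int K * 2^n" by (intro abs_floor_le) simp
    then show "\<exists>z. dyadic_trunc n s $ i = real_of_int z / 2 ^ Suc n \<and> \<bar>z\<bar> \<le> int K * 2 ^ Suc n"
      by (intro exI[of _ "2 * \<lfloor>2^n * s$i\<rfloor>"]) (simp add: dyadic_trunc_def abs_mult)
  qed
  moreover have "\<bar>dyadic_trunc n s $ i - dyadic_trunc (Suc n) s $ i\<bar> \<le> 1/2^Suc n" for i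
  proof -
    define y where "y = 2^n * s$i"
    have "dyadic_trunc (Suc n) s $ i - dyadic_trunc n s $ i = (of_int \<lfloor>2 * y\<rfloor> - 2 * of_int \<lfloor>y\<rfloor>) / 2^Suc n"
      by (simp add: dyadic_trunc_def y_def field_simps)
    moreover have "0 \<le> real_of_int \<lfloor>2 * y\<rfloor> - 2 * of_int \<lfloor>y\<rfloor>" "of_int \<lfloor>2 * y\<rfloor> - 2 * of_int \<lfloor>y\<rfloor> \<le> (1::real)"
      using floor_double_bounds[of y] by linarith+
    ultimately have "0 \<le> dyadic_trunc (Suc n) s $ i - dyadic_trunc n s $ i"
      "dyadic_trunc (Suc n) s $ i - dyadic_trunc n s $ i \<le> 1/2^Suc n"
      by (simp_all add: divide_right_mono del: power_Suc)
    then show ?thesis by (simp add: abs_le_iff del: power_Suc)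
  qed
  ultimately show ?thesis using dyadic_trunc_in_grid[OF assms] by (simp add: dyadic_neighbours_def)
qed

lemma dyadic_trunc_neighbours:
  assumes "\<forall>i. \<bar>s$i\<bar> \<le> real K" "\<forall>i. \<bar>t$i\<bar> \<le> real K" "\<forall>i. \<bar>s$i - t$i\<bar> \<le> 1/2^n"
  shows "(dyadic_trunc n s, dyadic_trunc n t) \<in> dyadic_neighbours K n"
proof -
  have "\<bar>dyadic_trunc n s $ i - dyadic_trunc n t $ i\<bar> \<le> 1/2^n" for i
  proof -
    have "\<bar>2^n * s$i - 2^n * t$i\<bar> = 2^n * \<bar>s$i - t$i\<bar>" by (simp add: right_diff_distrib[symmetric] abs_mult)
    also have "\<dots> \<le> 2^n * (1/2^n)" using assms(3) by (intro mult_left_mono) auto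
    finally have "\<bar>2^n * s$i - 2^n * t$i\<bar> \<le> 1" by simp
    then have "\<bar>\<lfloor>2^n * s$i\<rfloor> - \<lfloor>2^n * t$i\<rfloor>\<bar> \<le> 1" by (rule abs_floor_diff_le_one)
    then have "\<bar>real_of_int \<lfloor>2^n * s$i\<rfloor> - real_of_int \<lfloor>2^n * t$i\<rfloor>\<bar> \<le> 1" by linarith
    then have "\<bar>real_of_int \<lfloor>2^n * s$i\<rfloor> - real_of_int \<lfloor>2^n * t$i\<rfloor>\<bar> / 2^n \<le> 1/2^n"
      by (intro divide_right_mono) auto
    then show ?thesis by (simp add: dyadic_trunc_def diff_divide_distrib[symmetric])
  qed
  then show ?thesis
    using dyadic_trunc_in_grid[OF assms(1)] dyadic_trunc_in_grid[OF assms(2)]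
    by (simp add: dyadic_neighbours_def)
qed

lemma dyadic_trunc_component_dist: "\<bar>dyadic_trunc n s $ i - s $ i\<bar> \<le> 1/2^n"
proof -
  define x where "x = 2^n * s$i"
  have "s$i - real_of_int \<lfloor>x\<rfloor> / 2^n = (x - real_of_int \<lfloor>x\<rfloor>) / 2^n" by (simp add: x_def field_simps)
  moreover have "0 \<le> x - real_of_int \<lfloor>x\<rfloor>" "x - real_of_int \<lfloor>x\<rfloor> \<le> 1" by linarith+
  ultimately have "0 \<le> s$i - real_of_int \<lfloor>x\<rfloor> / 2^n" "s$i - real_of_int \<lfloor>x\<rfloor> / 2^n \<le> 1/2^n"
    by (auto intro: divide_right_mono)
  then show ?thesis by (simp add: dyadic_trunc_def abs_le_iff x_def)
qed

lemma norm_dyadic_trunc_diff_le: "norm (dyadic_trunc n s - s) \<le> real CARD('d) / 2^n"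
  for s :: "real^'d"
  using norm_le_card_mult[of "dyadic_trunc n s - s" "1/2^n"] dyadic_trunc_component_dist[of n s] by simp

lemma norm_diff_le_if_dyadic_neighbours:
  "(p, q) \<in> dyadic_neighbours K n \<Longrightarrow> norm (p - q) \<le> real CARD('d) / 2^n"
  for p q :: "real^'d"
  using norm_le_card_mult[of "p - q" "1/2^n"] by (simp add: dyadic_neighbours_def)

lemma dyadic_trunc_chain_le:
  fixes g :: "real^'d \<Rightarrow> real"
  assumes H: "\<And>n p q. (p, q) \<in> dyadic_neighbours K n \<Longrightarrow> \<bar>g p - g q\<bar> \<le> B * r^n"
    and s: "\<forall>i. \<bar>s$i\<bar> \<le> real K" and B: "B \<ge> 0" and r: "0 \<le> r" "r < 1" and "m \<le> n"
  shows "\<bar>g (dyadic_trunc n s) - g (dyadic_trunc m s)\<bar> \<le> B * r^m / (1 - r)"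
proof -
  have "\<bar>g (dyadic_trunc n s) - g (dyadic_trunc m s)\<bar> \<le> B * (r^Suc m - r^Suc n) / (1 - r)"
    using \<open>m \<le> n\<close>
  proof (induction n rule: dec_induct)
    case (step n)
    have "\<bar>g (dyadic_trunc (Suc n) s) - g (dyadic_trunc m s)\<bar>
        \<le> \<bar>g (dyadic_trunc n s) - g (dyadic_trunc (Suc n) s)\<bar> + \<bar>g (dyadic_trunc n s) - g (dyadic_trunc m s)\<bar>"
      by linarith
    also have "\<dots> \<le> B * r^Suc n + B * (r^Suc m - r^Suc n) / (1 - r)"
      using H[OF dyadic_trunc_Suc_neighbours[OF s]] step.IH by (rule add_mono)
    also have "\<dots> = B * (r^Suc m - r^Suc (Suc n)) / (1 - r)"
      using r by (simp add: field_simps)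
    finally show ?case .
  qed simp
  also have "\<dots> \<le> B * r^m / (1 - r)"
  proof -
    have "r * r^m \<le> r^m" "0 \<le> r * r^n" using r by (simp_all add: mult_left_le_one_le)
    then have "r^Suc m - r^Suc n \<le> r^m" by simp
    then show ?thesis using B r by (intro divide_right_mono mult_left_mono) auto
  qed
  finally show ?thesis .
qed

lemma dyadic_trunc_chain_le_near:
  fixes g :: "real^'d \<Rightarrow> real"
  assumes H: "\<And>n p q. (p, q) \<in> dyadic_neighbours K n \<Longrightarrow> \<bar>g p - g q\<bar> \<le> B * r^n"
    and s: "\<forall>i. \<bar>s$i\<bar> \<le> real K" and t: "\<forall>i. \<bar>t$i\<bar> \<le> real K"
    and st: "\<forall>i. \<bar>s$i - t$i\<bar> \<le> 1/2^m"
    and B: "B \<ge> 0" and r: "0 \<le> r" "r < 1" and "m \<le> n" "m \<le> n'"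
  shows "\<bar>g (dyadic_trunc n s) - g (dyadic_trunc n' t)\<bar> \<le> 3 * B * r^m / (1 - r)"
proof -
  have "\<bar>g (dyadic_trunc n s) - g (dyadic_trunc m s)\<bar> \<le> B * r^m / (1 - r)"
    "\<bar>g (dyadic_trunc n' t) - g (dyadic_trunc m t)\<bar> \<le> B * r^m / (1 - r)"
    using dyadic_trunc_chain_le[where g=g, OF H s B r \<open>m \<le> n\<close>]
      dyadic_trunc_chain_le[where g=g, OF H t B r \<open>m \<le> n'\<close>] by auto
  moreover have "\<bar>g (dyadic_trunc m s) - g (dyadic_trunc m t)\<bar> \<le> B * r^m"
    by (rule H[OF dyadic_trunc_neighbours[OF s t st]])
  moreover have "B * r^m \<le> B * r^m / (1 - r)"
    using B r by (simp add: field_simps mult_left_le_one_le)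
  moreover have "3 * B * r^m / (1 - r) = 3 * (B * r^m / (1 - r))" by simp
  ultimately show ?thesis by linarith
qed

lemma dyadic_limit_continuous:
  fixes g :: "real^'d \<Rightarrow> real" and B :: "nat \<Rightarrow> real"
  assumes H: "\<And>K n p q. (p, q) \<in> dyadic_neighbours K n \<Longrightarrow> \<bar>g p - g q\<bar> \<le> B K * r^n"
    and B: "\<And>K. B K \<ge> 0" and r: "0 \<le> r" "r < 1"
  shows "convergent (\<lambda>n. g (dyadic_trunc n s))"
    and "continuous_on UNIV (\<lambda>s. lim (\<lambda>n. g (dyadic_trunc n s)))"
proof -
  have small: "\<exists>m. 3 * B K * r^m / (1 - r) < \<epsilon>" if "\<epsilon> > 0" for K \<epsilon>
  proof -
    have "(\<lambda>m. 3 * B K * r^m / (1 - r)) \<longlonglongrightarrow> 3 * B K * 0 / (1 - r)"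
      using r by (intro tendsto_intros LIMSEQ_power_zero) auto
    then have "eventually (\<lambda>m. 3 * B K * r^m / (1 - r) < \<epsilon>) sequentially"
      using that by (intro order_tendstoD(2)) auto
    then show ?thesis by (auto simp: eventually_sequentially)
  qed
  have conv: "convergent (\<lambda>n. g (dyadic_trunc n s))" for s
  proof -
    define K where "K = nat \<lceil>norm s\<rceil>"
    have sK: "\<forall>i. \<bar>s$i\<bar> \<le> real K" by (rule components_le_if_norm_le) (simp add: K_def; linarith)
    have "Cauchy (\<lambda>n. g (dyadic_trunc n s))"
    proof (rule metric_CauchyI)
      fix \<epsilon> :: real assume "\<epsilon> > 0"
      then obtain m where m: "3 * B K * r^m / (1 - r) < \<epsilon>" using small by blast
      have "\<bar>g (dyadic_trunc n s) - g (dyadic_trunc n' s)\<bar> < \<epsilon>" if "m \<le> n" "m \<le> n'" for n n'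
        using dyadic_trunc_chain_le_near[where g=g and B="B K", OF H sK sK _ B r that] m by simp
      then show "\<exists>M. \<forall>n\<ge>M. \<forall>n'\<ge>M. dist (g (dyadic_trunc n s)) (g (dyadic_trunc n' s)) < \<epsilon>"
        by (auto simp: dist_real_def)
    qed
    then show ?thesis by (rule Cauchy_convergent)
  qed
  then show "convergent (\<lambda>n. g (dyadic_trunc n s))" .
  define G where "G s = lim (\<lambda>n. g (dyadic_trunc n s))" for s
  have G: "(\<lambda>n. g (dyadic_trunc n s)) \<longlonglongrightarrow> G s" for s
    using conv by (simp add: G_def convergent_LIMSEQ_iff)
  have "continuous_on UNIV G"
    unfolding continuous_on_iff
  proof (intro ballI allI impI)
    fix s :: "real^'d" and \<epsilon> :: real assume "\<epsilon> > 0"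
    define K where "K = nat \<lceil>norm s\<rceil> + 1"
    obtain m where m: "3 * B K * r^m / (1 - r) < \<epsilon>" using small \<open>\<epsilon> > 0\<close> by blast
    show "\<exists>\<delta>>0. \<forall>t\<in>UNIV. dist t s < \<delta> \<longrightarrow> dist (G t) (G s) < \<epsilon>"
    proof (intro exI[of _ "1/2^m"] conjI ballI impI)
      fix t :: "real^'d" assume dt: "dist t s < 1/2^m"
      have sK: "\<forall>i. \<bar>s$i\<bar> \<le> real K" by (rule components_le_if_norm_le) (simp add: K_def; linarith)
      have "(1::real) / 2^m \<le> 1" by simp
      with dt have "dist t s < 1" by linarith
      then have "norm t \<le> norm s + 1" using norm_triangle_ineq2[of t s] by (simp add: dist_norm)
      then have tK: "\<forall>i. \<bar>t$i\<bar> \<le> real K"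
        by (intro components_le_if_norm_le) (simp add: K_def; linarith)
      have "\<bar>(t - s)$i\<bar> \<le> 1/2^m" for i
        using component_le_norm_cart[of "t - s" i] dt by (simp add: dist_norm)
      then have st: "\<forall>i. \<bar>t$i - s$i\<bar> \<le> 1/2^m" by simp
      have "\<bar>g (dyadic_trunc n t) - g (dyadic_trunc n s)\<bar> \<le> 3 * B K * r^m / (1 - r)" if "m \<le> n" for n
        by (rule dyadic_trunc_chain_le_near[where g=g and B="B K", OF H tK sK st B r that that])
      moreover have "(\<lambda>n. \<bar>g (dyadic_trunc n t) - g (dyadic_trunc n s)\<bar>) \<longlonglongrightarrow> \<bar>G t - G s\<bar>"
        by (intro tendsto_intros G)
      ultimately have "\<bar>G t - G s\<bar> \<le> 3 * B K * r^m / (1 - r)"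
        by (intro tendsto_upperbound) (auto simp: eventually_sequentially intro!: exI[of _ m])
      then show "dist (G t) (G s) < \<epsilon>" using m by (simp add: dist_real_def)
    qed simp
  qed
  then show "continuous_on UNIV (\<lambda>s. lim (\<lambda>n. g (dyadic_trunc n s)))" by (simp add: G_def)
qed

section \<open>Kolmogorov's continuity theorem\<close>

lemma AE_summable_if_summable_integral:
  fixes f :: "nat \<Rightarrow> 'a \<Rightarrow> real"
  assumes f0: "\<And>n \<omega>. 0 \<le> f n \<omega>" and int: "\<And>n. integrable M (f n)"
    and summable: "summable (\<lambda>n. \<integral>\<omega>. f n \<omega> \<partial>M)"
  shows "AE \<omega> in M. summable (\<lambda>n. f n \<omega>)"
proof -
  have [measurable]: "f n \<in> borel_measurable M" for n using int by auto
  have "(\<integral>\<^sup>+\<omega>. (\<Sum>n. ennreal (f n \<omega>)) \<partial>M) = (\<Sum>n. \<integral>\<^sup>+\<omega>. ennreal (f n \<omega>) \<partial>M)"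
    by (rule nn_integral_suminf) measurable
  also have "\<dots> = (\<Sum>n. ennreal (\<integral>\<omega>. f n \<omega> \<partial>M))"
    using int f0 by (simp add: nn_integral_eq_integral)
  also have "\<dots> = ennreal (\<Sum>n. \<integral>\<omega>. f n \<omega> \<partial>M)"
    using summable f0 by (intro suminf_ennreal2) (auto intro: integral_nonneg_AE)
  finally have "(\<integral>\<^sup>+\<omega>. (\<Sum>n. ennreal (f n \<omega>)) \<partial>M) \<noteq> \<infinity>" by simp
  then have "AE \<omega> in M. (\<Sum>n. ennreal (f n \<omega>)) \<noteq> \<infinity>" by (intro nn_integral_PInf_AE) measurable
  then show ?thesis by eventually_elim (rule summable_suminf_not_top[OF f0], simp)
qed

lemma abs_eq_even_power_powr:
  fixes x :: real
  assumes "p > 0"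
  shows "\<bar>x\<bar> = (x ^ (2*p)) powr (1 / real (2*p))"
proof (cases "x = 0")
  case False
  have "x ^ (2*p) = \<bar>x\<bar> powr real (2*p)"
    using powr_realpow[of "\<bar>x\<bar>" "2*p"] False by (simp add: power_even_abs)
  then have "(x ^ (2*p)) powr (1 / real (2*p)) = \<bar>x\<bar> powr (real (2*p) * (1 / real (2*p)))"
    by (simp only: powr_powr)
  also have "\<dots> = \<bar>x\<bar>" using assms by simp
  finally show ?thesis by (rule sym)
qed (use assms in simp)

lemma abs_le_of_even_power_le:
  fixes x S :: real
  assumes le: "x ^ (2*p) \<le> S * (1/2)^n" and "p > 0"
  shows "\<bar>x\<bar> \<le> S powr (1 / real (2*p)) * ((1/2) powr (1 / real (2*p)))^n"
proof -
  define e where "e = 1 / real (2*p)"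
  have "0 \<le> x ^ (2*p)" by (simp add: power_even_abs)
  with le have "0 \<le> S * (1/2)^n" by linarith
  moreover have "(0::real) < (1/2)^n" by simp
  ultimately have "S \<ge> 0" using mult_neg_pos[of S "(1/2)^n"] by linarith
  have "\<bar>x\<bar> = (x ^ (2*p)) powr e" unfolding e_def using \<open>p > 0\<close> by (rule abs_eq_even_power_powr)
  also have "\<dots> \<le> (S * (1/2)^n) powr e" using le \<open>0 \<le> x ^ (2*p)\<close> by (intro powr_mono2) (auto simp: e_def)
  also have "\<dots> = S powr e * ((1/2) powr real n) powr e" by (simp add: powr_mult powr_realpow)
  also have "((1/2::real) powr real n) powr e = ((1/2) powr e)^n" by (simp add: powr_powr powr_power ac_simps)
  finally show ?thesis by (simp add: e_def)
qed

text \<open>The crude count (2^n)^(2d) of neighbouring pairs is beaten by the moment exponent 2d + 2.\<close>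
lemma dyadic_count_mesh_power_le:
  fixes K n d :: nat and C :: real
  assumes "C \<ge> 0"
  shows "real ((2*K*2^n+1)^(2*d)) * (C * (real d / 2^n)^(2*d+2))
    \<le> real (2*K+1)^(2*d) * C * real d^(2*d+2) * (1/4)^n"
proof -
  have "real (2*K*2^n+1) \<le> real (2*K+1) * 2^n"
    using one_le_power[of "2::real" n] by (simp add: algebra_simps)
  then have "real ((2*K*2^n+1)^(2*d)) \<le> (real (2*K+1) * 2^n)^(2*d)"
    by (simp only: of_nat_power) (intro power_mono; simp)
  then have "real ((2*K*2^n+1)^(2*d)) * (C * (real d / 2^n)^(2*d+2))
      \<le> (real (2*K+1) * 2^n)^(2*d) * (C * (real d / 2^n)^(2*d+2))"
    using assms by (intro mult_right_mono) auto
  also have "\<dots> = real (2*K+1)^(2*d) * C * real d^(2*d+2) * ((2^n)^(2*d) / (2^n)^(2*d+2))"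
    by (simp add: power_mult_distrib power_divide)
  also have "(2^n)^(2*d) / (2^n)^(2*d+2) = (1/4::real)^n"
  proof -
    have "(2::real)^n * 2^n = 4^n" by (simp flip: power_mult_distrib)
    then show ?thesis by (simp add: power_add power2_eq_square power_divide)
  qed
  finally show ?thesis .
qed

definition dyadic_increment_sum :: "(real^'d \<Rightarrow> 'a \<Rightarrow> real) \<Rightarrow> nat \<Rightarrow> nat \<Rightarrow> nat \<Rightarrow> 'a \<Rightarrow> real" where
  "dyadic_increment_sum X p K n \<omega> = (\<Sum>(s, t)\<in>dyadic_neighbours K n. (X s \<omega> - X t \<omega>) ^ (2*p))"

lemma dyadic_increment_sum_nonneg: "0 \<le> dyadic_increment_sum X p K n \<omega>"
  unfolding dyadic_increment_sum_def by (intro sum_nonneg) (auto simp: power_even_abs)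

lemma integral_dyadic_increment_sum_le:
  fixes X :: "real^'d \<Rightarrow> 'a \<Rightarrow> real"
  assumes int: "\<And>s t. integrable M (\<lambda>\<omega>. (X s \<omega> - X t \<omega>) ^ (2*p))"
    and mom: "\<And>s t. (\<integral>\<omega>. (X s \<omega> - X t \<omega>) ^ (2*p) \<partial>M) \<le> C * norm (s - t) ^ (2 * CARD('d) + 2)"
    and C: "C \<ge> 0"
  shows "integrable M (dyadic_increment_sum X p K n)"
    and "(\<integral>\<omega>. dyadic_increment_sum X p K n \<omega> \<partial>M)
           \<le> real (2*K+1)^(2 * CARD('d)) * C * real CARD('d)^(2 * CARD('d) + 2) * (1/4)^n"
proof -
  define d where "d = CARD('d)"
  let ?N = "dyadic_neighbours K n :: ((real^'d) \<times> (real^'d)) set"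
  show "integrable M (dyadic_increment_sum X p K n)"
    unfolding dyadic_increment_sum_def[abs_def] using int by (auto simp: case_prod_beta)
  have "(\<integral>\<omega>. dyadic_increment_sum X p K n \<omega> \<partial>M) = (\<Sum>(s, t)\<in>?N. \<integral>\<omega>. (X s \<omega> - X t \<omega>) ^ (2*p) \<partial>M)"
    unfolding dyadic_increment_sum_def using int by (auto simp: case_prod_beta)
  also have "\<dots> \<le> (\<Sum>(s, t)\<in>?N. C * (real d / 2^n)^(2*d+2))"
  proof (intro sum_mono, clarify)
    fix s t assume "(s, t) \<in> ?N"
    then have "norm (s - t) ^ (2*d+2) \<le> (real d / 2^n) ^ (2*d+2)"
      using norm_diff_le_if_dyadic_neighbours by (intro power_mono) (auto simp: d_def)
    then show "(\<integral>\<omega>. (X s \<omega> - X t \<omega>) ^ (2*p) \<partial>M) \<le> C * (real d / 2^n)^(2*d+2)"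
      using mom[of s t] C unfolding d_def by (meson mult_left_mono order_trans)
  qed
  also have "\<dots> = real (card ?N) * (C * (real d / 2^n)^(2*d+2))" by simp
  also have "\<dots> \<le> real ((2*K*2^n+1)^(2*d)) * (C * (real d / 2^n)^(2*d+2))"
  proof (rule mult_right_mono)
    show "real (card ?N) \<le> real ((2*K*2^n+1)^(2*d))"
      using card_dyadic_neighbours_le[of K n, where 'd='d] unfolding d_def by (simp only: of_nat_le_iff)
  qed (use C in simp)
  also have "\<dots> \<le> real (2*K+1)^(2*d) * C * real d^(2*d+2) * (1/4)^n"
    by (rule dyadic_count_mesh_power_le[OF C])
  finally show "(\<integral>\<omega>. dyadic_increment_sum X p K n \<omega> \<partial>M)
      \<le> real (2*K+1)^(2 * CARD('d)) * C * real CARD('d)^(2 * CARD('d) + 2) * (1/4)^n"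
    by (simp only: d_def)
qed

text \<open>The weight 2^n still leaves the summable majorant (1/2)^n; it is what turns
  almost sure summability into geometric decay of the increments.\<close>
lemma AE_summable_dyadic_increment_sum:
  fixes X :: "real^'d \<Rightarrow> 'a \<Rightarrow> real"
  assumes "\<And>s t. integrable M (\<lambda>\<omega>. (X s \<omega> - X t \<omega>) ^ (2*p))"
    and "\<And>s t. (\<integral>\<omega>. (X s \<omega> - X t \<omega>) ^ (2*p) \<partial>M) \<le> C * norm (s - t) ^ (2 * CARD('d) + 2)"
    and "C \<ge> 0"
  shows "AE \<omega> in M. summable (\<lambda>n. 2^n * dyadic_increment_sum X p K n \<omega>)"
proof (rule AE_summable_if_summable_integral)
  note bound = integral_dyadic_increment_sum_le[OF assms, of K]
  define c where "c = real (2*K+1)^(2 * CARD('d)) * C * real CARD('d)^(2 * CARD('d) + 2)"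
  show "integrable M (\<lambda>\<omega>. 2^n * dyadic_increment_sum X p K n \<omega>)" for n
    using bound(1) by simp
  show "0 \<le> 2^n * dyadic_increment_sum X p K n \<omega>" for n \<omega>
    by (simp add: dyadic_increment_sum_nonneg)
  have integral_le: "norm (\<integral>\<omega>. 2^n * dyadic_increment_sum X p K n \<omega> \<partial>M) \<le> c * (1/2)^n" for n
  proof -
    have "0 \<le> (\<integral>\<omega>. dyadic_increment_sum X p K n \<omega> \<partial>M)"
      by (intro integral_nonneg_AE) (simp add: dyadic_increment_sum_nonneg)
    then have "norm (\<integral>\<omega>. 2^n * dyadic_increment_sum X p K n \<omega> \<partial>M) = 2^n * (\<integral>\<omega>. dyadic_increment_sum X p K n \<omega> \<partial>M)"
      by simp
    also have "\<dots> \<le> 2^n * (c * (1/4)^n)" using bound(2)[of n] unfolding c_def by (intro mult_left_mono) auto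
    also have "\<dots> = c * (1/2)^n"
    proof -
      have "(2::real)^n * (1/4)^n = (1/2)^n" by (simp flip: power_mult_distrib)
      then show ?thesis by (metis mult.left_commute)
    qed
    finally show ?thesis .
  qed
  show "summable (\<lambda>n. \<integral>\<omega>. 2^n * dyadic_increment_sum X p K n \<omega> \<partial>M)"
    by (rule summable_comparison_test'[where N=0 and g="\<lambda>n. c * (1/2)^n"])
      (use integral_le in \<open>auto intro: summable_mult complete_algebra_summable_geometric\<close>)
qed

lemma dyadic_increment_le:
  assumes "summable (\<lambda>n. 2^n * dyadic_increment_sum X p K n \<omega>)" "p > 0"
    and "(s, t) \<in> dyadic_neighbours K n"
  shows "\<bar>X s \<omega> - X t \<omega>\<bar>
    \<le> (\<Sum>n. 2^n * dyadic_increment_sum X p K n \<omega>) powr (1 / real (2*p)) * ((1/2) powr (1 / real (2*p)))^n"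
proof (rule abs_le_of_even_power_le[OF _ \<open>p > 0\<close>])
  have "(\<lambda>(s, t). (X s \<omega> - X t \<omega>) ^ (2*p)) (s, t)
      \<le> (\<Sum>x\<in>dyadic_neighbours K n. (\<lambda>(s, t). (X s \<omega> - X t \<omega>) ^ (2*p)) x)"
    by (rule member_le_sum)
      (auto simp: zero_le_even_power assms(3) finite_dyadic_neighbours split: prod.split)
  then have "(X s \<omega> - X t \<omega>) ^ (2*p) \<le> dyadic_increment_sum X p K n \<omega>"
    by (simp add: dyadic_increment_sum_def)
  also have "2^n * dyadic_increment_sum X p K n \<omega> \<le> (\<Sum>n. 2^n * dyadic_increment_sum X p K n \<omega>)"
    using sum_le_suminf[OF assms(1), of "{n}"] by (simp add: dyadic_increment_sum_nonneg)
  then have "dyadic_increment_sum X p K n \<omega> \<le> (\<Sum>n. 2^n * dyadic_increment_sum X p K n \<omega>) * (1/2)^n"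
    by (simp add: field_simps power_divide)
  finally show "(X s \<omega> - X t \<omega>) ^ (2*p) \<le> (\<Sum>n. 2^n * dyadic_increment_sum X p K n \<omega>) * (1/2)^n" .
qed

lemma AE_dyadic_trunc_tendsto:
  fixes X :: "real^'d \<Rightarrow> 'a \<Rightarrow> real"
  assumes "p > 0"
    and int: "\<And>s t. integrable M (\<lambda>\<omega>. (X s \<omega> - X t \<omega>) ^ (2*p))"
    and mom: "\<And>s t. (\<integral>\<omega>. (X s \<omega> - X t \<omega>) ^ (2*p) \<partial>M) \<le> C * norm (s - t) ^ (2 * CARD('d) + 2)"
    and C: "C \<ge> 0"
  shows "AE \<omega> in M. (\<lambda>n. X (dyadic_trunc n s) \<omega>) \<longlonglongrightarrow> X s \<omega>"
proof -
  define Q where "Q = 2 * CARD('d) + 2"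
  define c where "c = C * real CARD('d) ^ Q"
  define q where "q = (1/2::real) ^ Q"
  have q: "0 \<le> q" "q < 1"
    unfolding q_def Q_def using power_Suc_less_one[of "1/2::real" "2 * CARD('d) + 1"] by simp_all
  have "AE \<omega> in M. summable (\<lambda>n. (X (dyadic_trunc n s) \<omega> - X s \<omega>) ^ (2*p))"
  proof (rule AE_summable_if_summable_integral)
    show "0 \<le> (X (dyadic_trunc n s) \<omega> - X s \<omega>) ^ (2*p)" for n \<omega>
      by (simp add: zero_le_even_power)
    show "integrable M (\<lambda>\<omega>. (X (dyadic_trunc n s) \<omega> - X s \<omega>) ^ (2*p))" for n
      by (rule int)
    have integral_le: "norm (\<integral>\<omega>. (X (dyadic_trunc n s) \<omega> - X s \<omega>) ^ (2*p) \<partial>M) \<le> c * q^n" for n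
    proof -
      have "norm (\<integral>\<omega>. (X (dyadic_trunc n s) \<omega> - X s \<omega>) ^ (2*p) \<partial>M)
          = (\<integral>\<omega>. (X (dyadic_trunc n s) \<omega> - X s \<omega>) ^ (2*p) \<partial>M)"
        by (simp add: integral_nonneg_AE zero_le_even_power)
      also have "\<dots> \<le> C * norm (dyadic_trunc n s - s) ^ Q" unfolding Q_def by (rule mom)
      also have "\<dots> \<le> C * (real CARD('d) / 2^n) ^ Q"
        using norm_dyadic_trunc_diff_le C by (intro mult_left_mono power_mono) auto
      also have "\<dots> = c * q^n"
        by (simp add: c_def q_def power_divide flip: power_mult)
      finally show ?thesis .
    qed
    show "summable (\<lambda>n. \<integral>\<omega>. (X (dyadic_trunc n s) \<omega> - X s \<omega>) ^ (2*p) \<partial>M)"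
      by (rule summable_comparison_test'[where N=0 and g="\<lambda>n. c * q^n"])
        (use integral_le q in \<open>auto intro: summable_mult summable_geometric\<close>)
  qed
  then show ?thesis
  proof eventually_elim
    case (elim \<omega>)
    then have "(\<lambda>n. (X (dyadic_trunc n s) \<omega> - X s \<omega>) ^ (2*p)) \<longlonglongrightarrow> 0"
      by (rule summable_LIMSEQ_zero)
    then have "(\<lambda>n. ((X (dyadic_trunc n s) \<omega> - X s \<omega>) ^ (2*p)) powr (1 / real (2*p))) \<longlonglongrightarrow> 0"
      by (rule tendsto_zero_powrI) (use \<open>p > 0\<close> in \<open>auto simp: zero_le_even_power\<close>)
    then have "(\<lambda>n. \<bar>X (dyadic_trunc n s) \<omega> - X s \<omega>\<bar>) \<longlonglongrightarrow> 0"
      unfolding abs_eq_even_power_powr[OF \<open>p > 0\<close>, symmetric] .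
    then show ?case by (simp add: tendsto_rabs_zero_iff LIM_zero_iff)
  qed
qed

theorem kolmogorov_continuous_modification:
  fixes X :: "real^'d \<Rightarrow> 'a \<Rightarrow> real"
  assumes "\<And>s. X s \<in> borel_measurable M"
    and p: "p > 0" and C: "C \<ge> 0"
    and int: "\<And>s t. integrable M (\<lambda>\<omega>. (X s \<omega> - X t \<omega>) ^ (2*p))"
    and mom: "\<And>s t. (\<integral>\<omega>. (X s \<omega> - X t \<omega>) ^ (2*p) \<partial>M) \<le> C * norm (s - t) ^ (2 * CARD('d) + 2)"
  shows "\<exists>Y :: real^'d \<Rightarrow> 'a \<Rightarrow> real.
           (\<forall>s. Y s \<in> borel_measurable M \<and> (AE \<omega> in M. Y s \<omega> = X s \<omega>)) \<and>
           (AE \<omega> in M. continuous_on UNIV (\<lambda>s. Y s \<omega>))"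
proof (intro exI conjI allI)
  define Y where "Y s \<omega> = lim (\<lambda>n. X (dyadic_trunc n s) \<omega>)" for s \<omega>
  show "Y s \<in> borel_measurable M" for s
    unfolding Y_def by (rule borel_measurable_lim_metric) (simp add: assms(1))
  show "AE \<omega> in M. Y s \<omega> = X s \<omega>" for s
    using AE_dyadic_trunc_tendsto[OF p int mom C, where s=s] by eventually_elim (simp add: Y_def limI)
  define r where "r = (1/2::real) powr (1 / real (2*p))"
  have "(1/2::real) powr (1 / real (2*p)) < 1 powr (1 / real (2*p))"
    using p by (intro powr_less_mono2) auto
  then have r: "0 \<le> r" "r < 1" by (simp_all add: r_def)
  have "AE \<omega> in M. \<forall>K. summable (\<lambda>n. 2^n * dyadic_increment_sum X p K n \<omega>)"
    using AE_summable_dyadic_increment_sum[OF int mom C] by (simp add: AE_all_countable)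
  then show "AE \<omega> in M. continuous_on UNIV (\<lambda>s. Y s \<omega>)"
  proof eventually_elim
    case (elim \<omega>)
    show ?case unfolding Y_def
    proof (rule dyadic_limit_continuous(2)[where g="\<lambda>s. X s \<omega>" and r=r, OF _ _ r])
      show "\<bar>X s \<omega> - X t \<omega>\<bar>
          \<le> (\<Sum>n. 2^n * dyadic_increment_sum X p K n \<omega>) powr (1 / real (2*p)) * r^n"
        if "(s, t) \<in> dyadic_neighbours K n" for K n s t
        using dyadic_increment_le[OF elim[rule_format] p that] by (simp add: r_def)
    qed simp
  qed
qed

theorem proposition2:
  fixes M :: "'a measure" and X :: "real^'d \<Rightarrow> 'a \<Rightarrow> real"
    and n1 n2 :: nat and \<alpha> :: "nat \<Rightarrow> nat" and \<kappa> :: "nat \<Rightarrow> real"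
    and b :: "nat \<Rightarrow> real" and B :: "nat \<Rightarrow> real^'d"
  assumes "prob_space M"
    and "\<forall>i<n1. (\<kappa> i)\<^sup>2 > 0"
    and "stationary_gaussian_with_spectral_density M X (spec_dens n1 \<alpha> \<kappa> n2 b B)"
    and "2 * int (\<Sum>i<n1. \<alpha> i) - 2 * int n2 > int CARD('d)"
  shows "\<exists>Y :: real^'d \<Rightarrow> 'a \<Rightarrow> real.
           (\<forall>s. Y s \<in> borel_measurable M \<and> (AE \<omega> in M. Y s \<omega> = X s \<omega>)) \<and>
           (AE \<omega> in M. continuous_on UNIV (\<lambda>s. Y s \<omega>))"
proof -
  \<comment> \<open>The variance of an increment is O(|s - t|^(1/2)), so its moment of order 8(d + 1) is
     O(|s - t|^(2d + 2)).\<close>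
  obtain C where "C \<ge> 0"
    and int: "\<And>s t. integrable M (\<lambda>\<omega>. (X s \<omega> - X t \<omega>) ^ (8 * (CARD('d) + 1)))"
    and mom: "\<And>s t. (\<integral>\<omega>. (X s \<omega> - X t \<omega>) ^ (8 * (CARD('d) + 1)) \<partial>M)
                      \<le> C * norm (s - t) ^ (2 * (CARD('d) + 1))"
    using stationary_gaussian_increment_moment_le[OF assms(1,3) spec_dens_nonneg[OF assms(2)]
        integrable_spec_dens[OF assms(2,4)]] by blast
  have "X s \<in> borel_measurable M" for s
    using gaussian_field_gaussian_rv[of M X s] assms(3)
    unfolding stationary_gaussian_with_spectral_density_def gaussian_rv_def by blast
  then show ?thesis
    by (rule kolmogorov_continuous_modification[where p="4 * (CARD('d) + 1)", OF _ _ \<open>C \<ge> 0\<close>])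
      (use int mom in \<open>simp_all add: mult.assoc\<close>)
qed

end
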